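(* Let $d\ge1$ and let $g=(\alpha_1,\dots,\alpha_d)\in(\mathbf{C}^* )^d$ with $\alpha_1,\dots,\alpha_d$ multiplicatively independent. Let $F\in\mathbf{C}[X_1^{\pm1},\dots,X_d^{\pm1}]$ be a Laurent polynomial such that the divisor $D=F^{-1}(0)\subset\mathbf{G}_m^d$ is irreducible and has finite stabilizer. Then the roots of the power sum $n\mapsto F(g^n)$ generate a subgroup of finite index in the multiplicative group generated by $\alpha_1,\dots,\alpha_d$.
   Context: A power sum is a function $n\mapsto \mathbf{f}(n)=\sum_{i=1}^k b_i\alpha_i^n$ with $k\ge1$, nonzero complex coefficients $b_i$ and pairwise distinct nonzero complex numbers $\alpha_i$; this representation is unique and the $\alpha_i$ are called the roots of $\mathbf{f}$. Here $g^n=(\alpha_1^n,\dots,\alpha_d^n)$. The stabilizer of $D\subset\mathbf{G}_m^d$ is $\{x\in\mathbf{G}_m^d: xD=D\}$. *)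

theory Defs
  imports Complex_Main
begin

definition torus :: "nat \<Rightarrow> (nat \<Rightarrow> complex) set" where
  "torus d = {x. (\<forall>i<d. x i \<noteq> 0) \<and> (\<forall>i\<ge>d. x i = 1)}"

text \<open>A Laurent polynomial in X_1..X_d (indices 0..d-1): a finitely supported coefficient
  function on exponent vectors, exponent vectors vanishing at indices at least d.\<close>
definition laurent_poly :: "nat \<Rightarrow> ((nat \<Rightarrow> int) \<Rightarrow> complex) \<Rightarrow> bool" where
  "laurent_poly d c \<longleftrightarrow> finite {e. c e \<noteq> 0} \<and> (\<forall>e. c e \<noteq> 0 \<longrightarrow> (\<forall>i\<ge>d. e i = 0))"

definition lp_eval :: "nat \<Rightarrow> ((nat \<Rightarrow> int) \<Rightarrow> complex) \<Rightarrow> (nat \<Rightarrow> complex) \<Rightarrow> complex" where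
  "lp_eval d c x = (\<Sum>e\<in>{e. c e \<noteq> 0}. c e * (\<Prod>i<d. x i powi e i))"

definition zariski_closed :: "nat \<Rightarrow> (nat \<Rightarrow> complex) set \<Rightarrow> bool" where
  "zariski_closed d Y \<longleftrightarrow> (\<exists>S. (\<forall>p\<in>S. laurent_poly d p) \<and>
      Y = {x\<in>torus d. \<forall>p\<in>S. lp_eval d p x = 0})"

definition zariski_irreducible :: "nat \<Rightarrow> (nat \<Rightarrow> complex) set \<Rightarrow> bool" where
  "zariski_irreducible d X \<longleftrightarrow> X \<noteq> {} \<and>
     (\<forall>Y Z. zariski_closed d Y \<longrightarrow> zariski_closed d Z \<longrightarrow> X = (X \<inter> Y) \<union> (X \<inter> Z)
        \<longrightarrow> X \<subseteq> Y \<or> X \<subseteq> Z)"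

definition stabilizer :: "nat \<Rightarrow> (nat \<Rightarrow> complex) set \<Rightarrow> (nat \<Rightarrow> complex) set" where
  "stabilizer d D = {x\<in>torus d. (\<lambda>y. (\<lambda>i. x i * y i)) ` D = D}"

definition mult_independent :: "nat \<Rightarrow> (nat \<Rightarrow> complex) \<Rightarrow> bool" where
  "mult_independent d a \<longleftrightarrow> (\<forall>k :: nat \<Rightarrow> int. (\<Prod>i<d. a i powi k i) = 1 \<longrightarrow> (\<forall>i<d. k i = 0))"

text \<open>Roots of a power sum f(n) = sum b_i alpha_i^n (n natural), via its unique representation.\<close>
definition power_sum_rep :: "(nat \<Rightarrow> complex) \<Rightarrow> complex set \<Rightarrow> bool" where
  "power_sum_rep f A \<longleftrightarrow> finite A \<and> A \<noteq> {} \<and> 0 \<notin> A \<and>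
     (\<exists>b. (\<forall>a\<in>A. b a \<noteq> 0) \<and> (\<forall>n. f n = (\<Sum>a\<in>A. b a * a ^ n)))"

definition power_sum_roots :: "(nat \<Rightarrow> complex) \<Rightarrow> complex set" where
  "power_sum_roots f = (THE A. power_sum_rep f A)"

inductive_set mgen :: "complex set \<Rightarrow> complex set" for S where
  one: "1 \<in> mgen S"
| mult: "x \<in> mgen S \<Longrightarrow> a \<in> S \<Longrightarrow> x * a \<in> mgen S"
| divi: "x \<in> mgen S \<Longrightarrow> a \<in> S \<Longrightarrow> x * inverse a \<in> mgen S"

definition finite_index :: "complex set \<Rightarrow> complex set \<Rightarrow> bool" where
  "finite_index H G \<longleftrightarrow> H \<subseteq> G \<and> finite ((\<lambda>x. (\<lambda>h. x * h) ` H) ` G)"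

end

theory Submission
  imports Defs
begin

text \<open>Write g^e for the monomial of exponent e evaluated at g. By multiplicative independence
  the roots of n \<mapsto> F(g^n) are exactly the g^e with e in the support of F. The exponent
  vectors u with g^u in the group H generated by these roots form a lattice containing the
  support. If it had rank less than d, an integer vector v orthogonal to it would give the
  infinite family t \<mapsto> (2^(t v_i))_i in the stabilizer of D. So the lattice contains m Z^d
  for some m > 0, i.e. every g_i^m lies in H, and the cosets of H are represented by the finitely
  many g^r with 0 \<le> r_i < m.\<close>

lemma mgen_generator: "a \<in> S \<Longrightarrow> a \<in> mgen S"
  using mgen.mult[OF mgen.one] by simp

lemma mgen_mult:
  assumes "x \<in> mgen S" "y \<in> mgen S"
  shows "x * y \<in> mgen S"
  using assms(2)
proof induction
  case one
  then show ?case using assms(1) by simp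
next
  case (mult y a)
  then show ?case by (metis mgen.mult mult.assoc)
next
  case (divi y a)
  then show ?case by (metis mgen.divi mult.assoc)
qed

lemma mgen_inverse:
  assumes "x \<in> mgen S"
  shows "inverse x \<in> mgen S"
  using assms
proof induction
  case one
  then show ?case by (simp add: mgen.one)
next
  case (mult y a)
  have "inverse (y * a) = (1 * inverse a) * inverse y" by (simp add: mult.commute)
  then show ?case using mult by (metis mgen.divi mgen.one mgen_mult)
next
  case (divi y a)
  have "inverse (y * inverse a) = (1 * a) * inverse y" by (simp add: mult.commute)
  then show ?case using divi by (metis mgen.mult mgen.one mgen_mult)
qed

lemma mgen_nonzero: "x \<in> mgen S \<Longrightarrow> 0 \<notin> S \<Longrightarrow> x \<noteq> 0"
  by (induction rule: mgen.induct) auto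

lemma mgen_power: "x \<in> mgen S \<Longrightarrow> x ^ n \<in> mgen S"
  by (induction n) (auto intro: mgen.one mgen_mult)

lemma mgen_power_int: "x \<in> mgen S \<Longrightarrow> x powi k \<in> mgen S"
  by (simp add: power_int_def mgen_power mgen_inverse)

lemma mgen_prod: "finite I \<Longrightarrow> (\<And>i. i \<in> I \<Longrightarrow> f i \<in> mgen S) \<Longrightarrow> prod f I \<in> mgen S"
  by (induction I rule: finite_induct) (auto intro: mgen.one mgen_mult)

lemma mgen_subset: "S \<subseteq> mgen T \<Longrightarrow> mgen S \<subseteq> mgen T"
proof
  fix x assume "S \<subseteq> mgen T" "x \<in> mgen S"
  then show "x \<in> mgen T"
    by (induction rule: mgen.induct[OF \<open>x \<in> mgen S\<close>]) (auto intro: mgen.one mgen_mult mgen_inverse)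
qed

lemma mgen_coset_eq:
  assumes "k \<in> mgen S" "0 \<notin> S"
  shows "(\<lambda>h. k * h) ` mgen S = mgen S"
proof
  show "(\<lambda>h. k * h) ` mgen S \<subseteq> mgen S" using assms(1) mgen_mult by blast
  show "mgen S \<subseteq> (\<lambda>h. k * h) ` mgen S"
  proof
    fix h assume "h \<in> mgen S"
    then have "inverse k * h \<in> mgen S" using mgen_mult mgen_inverse assms(1) by blast
    moreover have "h = k * (inverse k * h)" using mgen_nonzero assms by simp
    ultimately show "h \<in> (\<lambda>h. k * h) ` mgen S" by blast
  qed
qed

text \<open>Shifting the sequence and subtracting a0 times it removes the root a0.\<close>
lemma power_sum_eq_zero_imp_coeffs_zero:
  fixes c :: "complex \<Rightarrow> complex"
  assumes "finite A" "\<forall>n. (\<Sum>a\<in>A. c a * a ^ n) = 0"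
  shows "\<forall>a\<in>A. c a = 0"
  using assms
proof (induction A arbitrary: c rule: finite_induct)
  case empty
  then show ?case by simp
next
  case (insert a0 A)
  have split: "(\<Sum>a\<in>A. c a * a ^ n) = - (c a0 * a0 ^ n)" for n
    using insert by (simp add: eq_neg_iff_add_eq_0 add.commute)
  have "(\<Sum>a\<in>A. (c a * (a - a0)) * a ^ n) = 0" for n
  proof -
    have "(\<Sum>a\<in>A. (c a * (a - a0)) * a ^ n)
        = (\<Sum>a\<in>A. c a * a ^ Suc n) - a0 * (\<Sum>a\<in>A. c a * a ^ n)"
      by (simp add: sum_distrib_left sum_subtractf algebra_simps)
    then show ?thesis by (simp only: split) simp
  qed
  then have "\<forall>a\<in>A. c a * (a - a0) = 0" using insert.IH[of "\<lambda>a. c a * (a - a0)"] by blast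
  then have "\<forall>a\<in>A. c a = 0" using insert.hyps(2) by auto
  moreover from this have "c a0 = 0" using split[of 0] by simp
  ultimately show ?case by simp
qed

lemma power_sum_rep_subset:
  assumes "power_sum_rep f A" "power_sum_rep f B"
  shows "A \<subseteq> B"
proof
  fix x assume "x \<in> A"
  obtain b where b: "\<forall>a\<in>A. b a \<noteq> 0" "\<forall>n. f n = (\<Sum>a\<in>A. b a * a ^ n)" and "finite A"
    using assms(1) unfolding power_sum_rep_def by blast
  obtain b' where b': "\<forall>n. f n = (\<Sum>a\<in>B. b' a * a ^ n)" and "finite B"
    using assms(2) unfolding power_sum_rep_def by blast
  define c where "c a = (if a \<in> A then b a else 0) - (if a \<in> B then b' a else 0)" for a
  have "(\<Sum>a\<in>A \<union> B. c a * a ^ n) = 0" for n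
  proof -
    have "c a * a ^ n = (if a \<in> A then b a * a ^ n else 0) - (if a \<in> B then b' a * a ^ n else 0)" for a
      by (simp add: c_def algebra_simps)
    then have "(\<Sum>a\<in>A \<union> B. c a * a ^ n) = (\<Sum>a\<in>A \<union> B. if a \<in> A then b a * a ^ n else 0)
        - (\<Sum>a\<in>A \<union> B. if a \<in> B then b' a * a ^ n else 0)"
      by (simp add: sum_subtractf)
    also have "\<dots> = f n - f n"
      using \<open>finite A\<close> \<open>finite B\<close> b(2) b' by (simp add: sum.If_cases Int_absorb1)
    finally show ?thesis by simp
  qed
  then have "c x = 0"
    using power_sum_eq_zero_imp_coeffs_zero[of "A \<union> B" c] \<open>finite A\<close> \<open>finite B\<close> \<open>x \<in> A\<close> by blast
  then show "x \<in> B" using \<open>x \<in> A\<close> b(1) unfolding c_def by (auto split: if_splits)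
qed

lemma power_sum_roots_eqI:
  assumes "power_sum_rep f A"
  shows "power_sum_roots f = A"
  unfolding power_sum_roots_def
proof (rule the_equality)
  show "B = A" if "power_sum_rep f B" for B
    using that assms by (intro subset_antisym power_sum_rep_subset)
qed (fact assms)

definition monomial :: "nat \<Rightarrow> (nat \<Rightarrow> complex) \<Rightarrow> (nat \<Rightarrow> int) \<Rightarrow> complex" where
  "monomial d x e = (\<Prod>i<d. x i powi e i)"

lemma lp_eval_eq_sum_monomial: "lp_eval d F x = (\<Sum>e\<in>{e. F e \<noteq> 0}. F e * monomial d x e)"
  by (simp add: lp_eval_def monomial_def)

lemma monomial_zero [simp]: "monomial d x (\<lambda>_. 0) = 1"
  by (simp add: monomial_def)

lemma monomial_nonzero: "\<forall>i<d. x i \<noteq> 0 \<Longrightarrow> monomial d x e \<noteq> 0"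
  by (simp add: monomial_def)

lemma monomial_add:
  "\<forall>i<d. x i \<noteq> 0 \<Longrightarrow> monomial d x (\<lambda>i. e i + e' i) = monomial d x e * monomial d x e'"
  by (simp add: monomial_def power_int_add prod.distrib)

lemma monomial_uminus: "monomial d x (\<lambda>i. - e i) = inverse (monomial d x e)"
  using prod_inversef[of "\<lambda>i. x i powi e i" "{..<d}"]
  by (simp add: monomial_def power_int_minus comp_def)

lemma monomial_diff:
  "\<forall>i<d. x i \<noteq> 0 \<Longrightarrow> monomial d x (\<lambda>i. e i - e' i) = monomial d x e / monomial d x e'"
  using monomial_add[of d x e "\<lambda>i. - e' i"] by (simp add: monomial_uminus divide_inverse)

lemma monomial_unit_vector: "j < d \<Longrightarrow> monomial d x (\<lambda>i. if i = j then k else 0) = x j powi k"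
  unfolding monomial_def by (simp add: if_distrib[of "power_int _"] prod.delta cong: if_cong)

lemma monomial_mult_point:
  "monomial d (\<lambda>i. x i * y i) e = monomial d x e * monomial d y e"
  by (simp add: monomial_def power_int_mult_distrib prod.distrib)

lemma monomial_inverse_point: "monomial d (\<lambda>i. inverse (x i)) e = inverse (monomial d x e)"
  using prod_inversef[of "\<lambda>i. x i powi e i" "{..<d}"]
  by (simp add: monomial_def power_int_inverse comp_def)

lemma monomial_power_point:
  "monomial d (\<lambda>i. if i < d then x i ^ n else 1) e = monomial d x e ^ n"
proof -
  have "monomial d (\<lambda>i. if i < d then x i ^ n else 1) e = (\<Prod>i<d. (x i powi e i) ^ n)"
    unfolding monomial_def by (rule prod.cong) (auto simp: power_int_power power_int_power' mult.commute)
  then show ?thesis by (simp add: monomial_def prod_power_distrib)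
qed

lemma inj_on_monomial:
  assumes "\<forall>i<d. g i \<noteq> 0" "mult_independent d g"
  shows "inj_on (monomial d g) {e. \<forall>i\<ge>d. e i = 0}"
proof (rule inj_onI)
  fix e e' assume e: "e \<in> {e. \<forall>i\<ge>d. e i = 0}" "e' \<in> {e. \<forall>i\<ge>d. e i = 0}"
    and "monomial d g e = monomial d g e'"
  then have "monomial d g (\<lambda>i. e i - e' i) = 1"
    using assms(1) by (simp add: monomial_diff monomial_nonzero)
  then have "\<forall>i<d. e i - e' i = 0"
    using spec[OF assms(2)[unfolded mult_independent_def], of "\<lambda>i. e i - e' i"]
    by (simp add: monomial_def)
  show "e = e'"
  proof
    fix i show "e i = e' i"
      using e \<open>\<forall>i<d. e i - e' i = 0\<close> by (cases "i < d") auto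
  qed
qed

lemma power_sum_roots_lp_eval:
  assumes g: "\<forall>i<d. g i \<noteq> 0" "mult_independent d g"
    and F: "laurent_poly d F" "{e. F e \<noteq> 0} \<noteq> {}"
  shows "power_sum_roots (\<lambda>n. lp_eval d F (\<lambda>i. if i < d then g i ^ n else 1))
       = monomial d g ` {e. F e \<noteq> 0}"
proof (rule power_sum_roots_eqI)
  define S where "S = {e. F e \<noteq> 0}"
  have "finite S" and "S \<subseteq> {e. \<forall>i\<ge>d. e i = 0}"
    using F(1) unfolding laurent_poly_def S_def by auto
  then have inj: "inj_on (monomial d g) S" using inj_on_monomial[OF g] inj_on_subset by blast
  define b where "b a = F (the_inv_into S (monomial d g) a)" for a
  have b_monomial: "b (monomial d g e) = F e" if "e \<in> S" for e
    using that by (simp add: b_def the_inv_into_f_f[OF inj])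
  have "lp_eval d F (\<lambda>i. if i < d then g i ^ n else 1) = (\<Sum>a\<in>monomial d g ` S. b a * a ^ n)" for n
  proof -
    have "lp_eval d F (\<lambda>i. if i < d then g i ^ n else 1) = (\<Sum>e\<in>S. F e * monomial d g e ^ n)"
      by (simp add: lp_eval_eq_sum_monomial monomial_power_point S_def)
    also have "\<dots> = (\<Sum>e\<in>S. b (monomial d g e) * monomial d g e ^ n)"
      by (rule sum.cong) (simp_all add: b_monomial)
    finally show ?thesis by (simp add: sum.reindex[OF inj])
  qed
  moreover have "\<forall>a\<in>monomial d g ` S. b a \<noteq> 0" using b_monomial S_def by auto
  ultimately show "power_sum_rep (\<lambda>n. lp_eval d F (\<lambda>i. if i < d then g i ^ n else 1)) (monomial d g ` S)"
    unfolding power_sum_rep_def using \<open>finite S\<close> F(2) monomial_nonzero[OF g(1)] S_def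
    by (intro conjI exI[of _ b]) auto
qed

lemma monomial_in_mgen: "monomial d g e \<in> mgen (g ` {..<d})"
  unfolding monomial_def by (intro mgen_prod mgen_power_int mgen_generator) auto

lemma mgen_imp_monomial:
  assumes "x \<in> mgen (g ` {..<d})" "\<forall>i<d. g i \<noteq> 0"
  shows "\<exists>u. (\<forall>i\<ge>d. u i = 0) \<and> x = monomial d g u"
  using assms(1)
proof induction
  case one
  show ?case by (intro exI[of _ "\<lambda>_. 0"]) simp
next
  case (mult x a)
  then obtain u j where u: "\<forall>i\<ge>d. u i = 0" "x = monomial d g u" and j: "j < d" "a = g j" by blast
  let ?u = "\<lambda>i. u i + (if i = j then 1 else 0)"
  have "x * a = monomial d g ?u" using u j assms(2) by (simp add: monomial_add monomial_unit_vector)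
  then show ?case using u(1) j(1) by (intro exI[of _ ?u]) auto
next
  case (divi x a)
  then obtain u j where u: "\<forall>i\<ge>d. u i = 0" "x = monomial d g u" and j: "j < d" "a = g j" by blast
  let ?u = "\<lambda>i. u i - (if i = j then 1 else 0)"
  have "x * inverse a = monomial d g ?u"
    using u j assms(2) by (simp add: monomial_diff monomial_unit_vector divide_inverse)
  then show ?case using u(1) j(1) by (intro exI[of _ ?u]) auto
qed

text \<open>Reducing exponents modulo m shows that the cosets of the monomials with exponents
  in [0, m) exhaust the quotient.\<close>
lemma finite_index_if_generator_powers:
  fixes g :: "nat \<Rightarrow> complex"
  assumes g: "\<forall>i<d. g i \<noteq> 0" and R: "0 \<notin> R" "R \<subseteq> mgen (g ` {..<d})"
    and m: "m > 0" "\<forall>i<d. g i ^ m \<in> mgen R"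
  shows "finite_index (mgen R) (mgen (g ` {..<d}))"
proof -
  define Rep where "Rep = {r. \<forall>i. (i \<in> {..<d} \<longrightarrow> r i \<in> {0..<int m}) \<and> (i \<notin> {..<d} \<longrightarrow> r i = 0)}"
  have "finite Rep" unfolding Rep_def by (rule finite_set_of_finite_funs) auto
  have "\<exists>r\<in>Rep. (\<lambda>h. x * h) ` mgen R = (\<lambda>h. monomial d g r * h) ` mgen R"
    if x: "x \<in> mgen (g ` {..<d})" for x
  proof -
    obtain u where u: "\<forall>i\<ge>d. u i = 0" "x = monomial d g u"
      using mgen_imp_monomial[OF x g] by blast
    define r where "r i = u i mod int m" for i
    define q where "q i = u i div int m" for i
    have "r \<in> Rep" unfolding Rep_def r_def using u(1) m(1) by auto
    have "monomial d g (\<lambda>i. int m * q i) = (\<Prod>i<d. (g i ^ m) powi q i)"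
      unfolding monomial_def by (simp add: power_int_power)
    also have "\<dots> \<in> mgen R" using m(2) by (intro mgen_prod mgen_power_int) auto
    finally have "(\<lambda>h. monomial d g (\<lambda>i. int m * q i) * h) ` mgen R = mgen R"
      using R(1) by (rule mgen_coset_eq)
    moreover have "x = monomial d g r * monomial d g (\<lambda>i. int m * q i)"
      using u(2) g by (simp add: r_def q_def flip: monomial_add)
    ultimately have "(\<lambda>h. x * h) ` mgen R = (\<lambda>h. monomial d g r * h) ` mgen R"
      by (metis (no_types, lifting) image_image mult.assoc image_cong)
    with \<open>r \<in> Rep\<close> show ?thesis by blast
  qed
  then have "(\<lambda>x. (\<lambda>h. x * h) ` mgen R) ` mgen (g ` {..<d})
      \<subseteq> (\<lambda>r. (\<lambda>h. monomial d g r * h) ` mgen R) ` Rep"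
    by blast
  then have "finite ((\<lambda>x. (\<lambda>h. x * h) ` mgen R) ` mgen (g ` {..<d}))"
    using \<open>finite Rep\<close> by (rule finite_subset[OF _ finite_imageI])
  then show ?thesis
    unfolding finite_index_def using mgen_subset[OF R(2)] by blast
qed

definition int_lattice :: "(nat \<Rightarrow> int) set \<Rightarrow> bool" where
  "int_lattice L \<longleftrightarrow> (\<lambda>_. 0) \<in> L \<and> (\<forall>u\<in>L. \<forall>w\<in>L. (\<lambda>i. u i + w i) \<in> L) \<and> (\<forall>u\<in>L. (\<lambda>i. - u i) \<in> L)"

lemma int_lattice_add: "int_lattice L \<Longrightarrow> u \<in> L \<Longrightarrow> w \<in> L \<Longrightarrow> (\<lambda>i. u i + w i) \<in> L"
  and int_lattice_uminus: "int_lattice L \<Longrightarrow> u \<in> L \<Longrightarrow> (\<lambda>i. - u i) \<in> L"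
  by (simp_all add: int_lattice_def)

lemma int_lattice_diff: "int_lattice L \<Longrightarrow> u \<in> L \<Longrightarrow> w \<in> L \<Longrightarrow> (\<lambda>i. u i - w i) \<in> L"
  using int_lattice_add[of L u "\<lambda>i. - w i"] int_lattice_uminus by simp

lemma int_lattice_sum:
  assumes "int_lattice L" "finite J" "\<And>j. j \<in> J \<Longrightarrow> f j \<in> L"
  shows "(\<lambda>i. \<Sum>j\<in>J. f j i) \<in> L"
  using assms(2,3)
proof (induction J rule: finite_induct)
  case empty
  then show ?case using assms(1) by (simp add: int_lattice_def)
next
  case (insert j J)
  then show ?case using int_lattice_add[OF assms(1), of "f j"] by simp
qed

lemma int_lattice_scale:
  assumes "int_lattice L" "u \<in> L"
  shows "(\<lambda>i. c * u i) \<in> L"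
proof -
  have nat_scale: "(\<lambda>i. int n * u i) \<in> L" for n
    using int_lattice_sum[OF assms(1), of "{..<n}" "\<lambda>_. u"] assms(2) by simp
  show ?thesis
  proof (cases "c \<ge> 0")
    case True
    then show ?thesis using nat_scale[of "nat c"] by simp
  next
    case False
    then show ?thesis using int_lattice_uminus[OF assms(1) nat_scale[of "nat (- c)"]] by simp
  qed
qed

definition eliminate :: "(nat \<Rightarrow> int) \<Rightarrow> nat \<Rightarrow> (nat \<Rightarrow> int) \<Rightarrow> nat \<Rightarrow> int" where
  "eliminate w j u = (\<lambda>i. w j * u i - u j * w i)"

lemma eliminate_in_int_lattice:
  "int_lattice L \<Longrightarrow> w \<in> L \<Longrightarrow> u \<in> L \<Longrightarrow> eliminate w j u \<in> L"
  unfolding eliminate_def by (intro int_lattice_diff int_lattice_scale)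

lemma int_lattice_eliminate_image:
  assumes "int_lattice L"
  shows "int_lattice (eliminate w j ` L)"
  unfolding int_lattice_def
proof (intro conjI ballI)
  show "(\<lambda>_. 0) \<in> eliminate w j ` L"
    using assms by (auto simp: int_lattice_def eliminate_def intro!: image_eqI[of _ _ "\<lambda>_. 0"])
  fix u u' assume "u \<in> eliminate w j ` L" "u' \<in> eliminate w j ` L"
  then obtain x x' where "x \<in> L" "x' \<in> L" "u = eliminate w j x" "u' = eliminate w j x'" by blast
  then show "(\<lambda>i. u i + u' i) \<in> eliminate w j ` L"
    using int_lattice_add[OF assms \<open>x \<in> L\<close> \<open>x' \<in> L\<close>]
    by (auto simp: eliminate_def algebra_simps intro!: image_eqI[of _ _ "\<lambda>i. x i + x' i"])
next
  fix u assume "u \<in> eliminate w j ` L"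
  then obtain x where "x \<in> L" "u = eliminate w j x" by blast
  then show "(\<lambda>i. - u i) \<in> eliminate w j ` L"
    using int_lattice_uminus[OF assms \<open>x \<in> L\<close>]
    by (auto simp: eliminate_def algebra_simps intro!: image_eqI[of _ _ "\<lambda>i. - x i"])
qed

lemma annihilator_lift:
  assumes "w d \<noteq> 0" and v': "j < d" "v' j \<noteq> 0"
    and ann: "\<forall>u\<in>eliminate w d ` L. (\<Sum>i<d. v' i * u i) = 0"
  shows "\<exists>v. (\<exists>i<Suc d. v i \<noteq> 0) \<and> (\<forall>u\<in>L. (\<Sum>i<Suc d. v i * u i) = 0)"
proof -
  define v where "v i = (if i < d then w d * v' i else - (\<Sum>k<d. v' k * w k))" for i
  have "\<exists>i<Suc d. v i \<noteq> 0" using v' \<open>w d \<noteq> 0\<close> by (auto simp: v_def intro!: exI[of _ j])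
  moreover have "(\<Sum>i<Suc d. v i * u i) = 0" if "u \<in> L" for u
  proof -
    have "(\<Sum>i<Suc d. v i * u i) = (\<Sum>i<d. v' i * eliminate w d u i)"
      by (simp add: v_def eliminate_def sum_distrib_left sum_distrib_right sum_subtractf algebra_simps)
    also have "\<dots> = 0" using ann that by blast
    finally show ?thesis .
  qed
  ultimately show ?thesis by blast
qed

lemma full_rank_lift:
  assumes L: "int_lattice L" "\<forall>u\<in>L. \<forall>i\<ge>Suc d. u i = 0"
    and w: "w \<in> L" "w d \<noteq> 0"
    and m: "m > 0" "\<forall>i<d. (\<lambda>j. if j = i then m else 0) \<in> L"
  shows "\<exists>M>0. \<forall>i<Suc d. (\<lambda>j. if j = i then M else 0) \<in> L"
proof (intro exI conjI allI impI)
  show "m * \<bar>w d\<bar> > 0" using m(1) w(2) by simp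
  fix i assume "i < Suc d"
  show "(\<lambda>j. if j = i then m * \<bar>w d\<bar> else 0) \<in> L"
  proof (cases "i < d")
    case True
    then show ?thesis
      using int_lattice_scale[OF L(1) m(2)[rule_format, OF True], of "\<bar>w d\<bar>"]
      by (simp add: if_distrib mult.commute cong: if_cong)
  next
    case False
    then have "i = d" using \<open>i < Suc d\<close> by simp
    define z where "z j = m * w j - (\<Sum>k<d. w k * (if j = k then m else 0))" for j
    have "z \<in> L"
      unfolding z_def using m(2)
      by (intro int_lattice_diff[OF L(1)] int_lattice_scale[OF L(1) w(1)]
          int_lattice_sum[OF L(1)] int_lattice_scale[OF L(1)]) auto
    moreover have "z = (\<lambda>j. if j = d then m * w d else 0)"
    proof
      fix j show "z j = (if j = d then m * w d else 0)"
        using L(2) w(1) by (cases "j < d") (auto simp: z_def if_distrib[of "\<lambda>x. w _ * x"] cong: if_cong)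
    qed
    ultimately have "(\<lambda>j. if j = d then sgn (w d) * (m * w d) else 0) \<in> L"
      using int_lattice_scale[OF L(1), of z "sgn (w d)"] by (simp add: if_distrib cong: if_cong)
    moreover have "sgn (w d) * (m * w d) = m * \<bar>w d\<bar>" by (simp add: abs_sgn algebra_simps)
    ultimately show ?thesis unfolding \<open>i = d\<close> by (simp only:)
  qed
qed

text \<open>Induction on d: a lattice vector w with w d \<noteq> 0 eliminates the last coordinate, and
  either alternative for the eliminated lattice lifts back.\<close>
lemma int_lattice_dichotomy:
  assumes "int_lattice L" "\<forall>u\<in>L. \<forall>i\<ge>d. u i = 0"
  shows "(\<exists>v. (\<exists>i<d. v i \<noteq> 0) \<and> (\<forall>u\<in>L. (\<Sum>i<d. v i * u i) = 0))
       \<or> (\<exists>m>0. \<forall>i<d. (\<lambda>j. if j = i then m else 0) \<in> L)"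
  using assms
proof (induction d arbitrary: L)
  case 0
  then show ?case by (intro disjI2 exI[of _ 1]) auto
next
  case (Suc d)
  show ?case
  proof (cases "\<forall>u\<in>L. u d = 0")
    case True
    then show ?thesis by (intro disjI1 exI[of _ "\<lambda>i. if i = d then 1 else 0"]) auto
  next
    case False
    then obtain w where w: "w \<in> L" "w d \<noteq> 0" by blast
    have "\<forall>u\<in>eliminate w d ` L. \<forall>i\<ge>d. u i = 0"
    proof (intro ballI allI impI)
      fix u i assume "u \<in> eliminate w d ` L" "d \<le> i"
      then obtain x where "x \<in> L" "u = eliminate w d x" by blast
      show "u i = 0"
      proof (cases "i = d")
        case False
        then have "Suc d \<le> i" using \<open>d \<le> i\<close> by simp
        then have "x i = 0" "w i = 0" using Suc.prems(2) w(1) \<open>x \<in> L\<close> by blast+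
        then show ?thesis by (simp add: \<open>u = eliminate w d x\<close> eliminate_def)
      qed (simp add: \<open>u = eliminate w d x\<close> eliminate_def)
    qed
    from Suc.IH[OF int_lattice_eliminate_image[OF Suc.prems(1)] this] show ?thesis
    proof
      assume "\<exists>v. (\<exists>i<d. v i \<noteq> 0) \<and> (\<forall>u\<in>eliminate w d ` L. (\<Sum>i<d. v i * u i) = 0)"
      then obtain v' j where v': "j < d" "v' j \<noteq> 0"
        and "\<forall>u\<in>eliminate w d ` L. (\<Sum>i<d. v' i * u i) = 0" by blast
      then show ?thesis by (intro disjI1 annihilator_lift[of w d j v', OF w(2) v'])
    next
      assume "\<exists>m>0. \<forall>i<d. (\<lambda>j. if j = i then m else 0) \<in> eliminate w d ` L"
      then obtain m where "m > 0" "\<forall>i<d. (\<lambda>j. if j = i then m else 0) \<in> eliminate w d ` L"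
        by blast
      moreover have "eliminate w d ` L \<subseteq> L"
        using eliminate_in_int_lattice[OF Suc.prems(1) w(1)] by blast
      ultimately have m: "m > 0" "\<forall>i<d. (\<lambda>j. if j = i then m else 0) \<in> L" by auto
      then show ?thesis by (intro disjI2 full_rank_lift[OF Suc.prems w m])
    qed
  qed
qed

lemma torus_mult: "x \<in> torus d \<Longrightarrow> y \<in> torus d \<Longrightarrow> (\<lambda>i. x i * y i) \<in> torus d"
  and torus_inverse: "x \<in> torus d \<Longrightarrow> (\<lambda>i. inverse (x i)) \<in> torus d"
  by (simp_all add: torus_def)

lemma lp_eval_translate:
  "\<forall>e. F e \<noteq> 0 \<longrightarrow> monomial d x e = 1 \<Longrightarrow> lp_eval d F (\<lambda>i. x i * y i) = lp_eval d F y"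
  by (simp add: lp_eval_eq_sum_monomial monomial_mult_point)

lemma in_stabilizer_if_monomials_trivial:
  assumes x: "x \<in> torus d" and triv: "\<forall>e. F e \<noteq> 0 \<longrightarrow> monomial d x e = 1"
  shows "x \<in> stabilizer d {y\<in>torus d. lp_eval d F y = 0}"
proof -
  let ?D = "{y\<in>torus d. lp_eval d F y = 0}"
  let ?x' = "\<lambda>i. inverse (x i)"
  have triv': "\<forall>e. F e \<noteq> 0 \<longrightarrow> monomial d ?x' e = 1"
    using triv by (simp add: monomial_inverse_point)
  have "(\<lambda>y i. x i * y i) ` ?D \<subseteq> ?D"
    using x torus_mult lp_eval_translate[OF triv] by auto
  moreover have "?D \<subseteq> (\<lambda>y i. x i * y i) ` ?D"
  proof
    fix y assume y: "y \<in> ?D"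
    then have "(\<lambda>i. ?x' i * y i) \<in> ?D"
      using x torus_mult torus_inverse lp_eval_translate[OF triv'] by auto
    moreover have "y = (\<lambda>i. x i * (?x' i * y i))"
    proof
      fix i show "y i = x i * (?x' i * y i)"
        using x unfolding torus_def by (cases "i < d") auto
    qed
    ultimately show "y \<in> (\<lambda>y i. x i * y i) ` ?D"
      using image_eqI[of y "\<lambda>y i. x i * y i" "\<lambda>i. ?x' i * y i" ?D] by simp
  qed
  ultimately show ?thesis using x unfolding stabilizer_def by auto
qed

lemma prod_power_int_sum:
  assumes "(x :: 'a :: field) \<noteq> 0" "finite I"
  shows "(\<Prod>i\<in>I. x powi f i) = x powi (\<Sum>i\<in>I. f i)"
  using assms(2) by (induction I rule: finite_induct) (simp_all add: power_int_add assms(1))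

lemma two_power_int_inject:
  assumes "(2 :: complex) powi k = 2 powi l"
  shows "k = l"
proof -
  have "of_real ((2 :: real) powi k) = (of_real (2 powi l) :: complex)"
    using assms by simp
  then have eq: "(2 :: real) powi k = 2 powi l" by (rule of_real_eq_iff[THEN iffD1])
  show "k = l"
  proof (rule linorder_cases[of k l])
    assume "k < l"
    with power_int_strict_increasing[of k l "2 :: real"] eq show ?thesis by simp
  next
    assume "l < k"
    with power_int_strict_increasing[of l k "2 :: real"] eq show ?thesis by simp
  qed
qed

text \<open>The witness is the one-parameter subgroup t \<mapsto> (2^(t v_i))_i.\<close>
lemma stabilizer_infinite_if_annihilated:
  assumes v: "j < d" "v j \<noteq> 0" and ann: "\<forall>e. F e \<noteq> 0 \<longrightarrow> (\<Sum>i<d. v i * e i) = 0"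
  shows "infinite (stabilizer d {x\<in>torus d. lp_eval d F x = 0})"
proof -
  define p where "p t i = (if i < d then (2 :: complex) powi (int t * v i) else 1)" for t i
  have "p t \<in> stabilizer d {x\<in>torus d. lp_eval d F x = 0}" for t
  proof (rule in_stabilizer_if_monomials_trivial)
    show "p t \<in> torus d" by (simp add: p_def torus_def)
    have "monomial d (p t) e = 2 powi (\<Sum>i<d. int t * (v i * e i))" for e
      unfolding monomial_def
      by (subst prod_power_int_sum[symmetric]) (auto simp: p_def power_int_mult[symmetric] mult.assoc)
    then show "\<forall>e. F e \<noteq> 0 \<longrightarrow> monomial d (p t) e = 1"
      using ann by (simp add: sum_distrib_left[symmetric])
  qed
  moreover have "inj p"
  proof (rule injI)
    fix s t assume "p s = p t"
    then have "p s j = p t j" by simp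
    then have "int s * v j = int t * v j"
      using v(1) by (intro two_power_int_inject) (simp add: p_def)
    then show "s = t" using v(2) by simp
  qed
  ultimately have "range p \<subseteq> stabilizer d {x\<in>torus d. lp_eval d F x = 0}" "infinite (range p)"
    using finite_imageD by blast+
  then show ?thesis using finite_subset by blast
qed

lemma generator_powers_in_mgen_monomials:
  fixes g :: "nat \<Rightarrow> complex"
  assumes g: "\<forall>i<d. g i \<noteq> 0" and F: "laurent_poly d F"
    and stab: "finite (stabilizer d {x\<in>torus d. lp_eval d F x = 0})"
  shows "\<exists>m>0. \<forall>i<d. g i ^ m \<in> mgen (monomial d g ` {e. F e \<noteq> 0})"
proof -
  let ?H = "mgen (monomial d g ` {e. F e \<noteq> 0})"
  define L where "L = {u. (\<forall>i\<ge>d. u i = 0) \<and> monomial d g u \<in> ?H}"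
  have lattice: "int_lattice L"
    unfolding int_lattice_def L_def
    using g by (auto simp: monomial_add monomial_uminus intro: mgen.one mgen_mult mgen_inverse)
  have support: "\<forall>u\<in>L. \<forall>i\<ge>d. u i = 0" by (simp add: L_def)
  have exponents: "{e. F e \<noteq> 0} \<subseteq> L"
    using F by (auto simp: L_def laurent_poly_def intro: mgen_generator)
  from int_lattice_dichotomy[OF lattice support] show ?thesis
  proof
    assume "\<exists>v. (\<exists>i<d. v i \<noteq> 0) \<and> (\<forall>u\<in>L. (\<Sum>i<d. v i * u i) = 0)"
    then obtain v j where "j < d" "v j \<noteq> 0" "\<forall>u\<in>L. (\<Sum>i<d. v i * u i) = 0" by blast
    then have "infinite (stabilizer d {x\<in>torus d. lp_eval d F x = 0})"
      using exponents by (intro stabilizer_infinite_if_annihilated) auto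
    with stab show ?thesis by blast
  next
    assume "\<exists>m>0. \<forall>i<d. (\<lambda>j. if j = i then m else 0) \<in> L"
    then obtain m where "m > 0" and "\<forall>i<d. (\<lambda>j. if j = i then m else 0) \<in> L" by blast
    then have "\<forall>i<d. g i powi m \<in> ?H" by (simp add: L_def monomial_unit_vector)
    moreover have "g i powi m = g i ^ nat m" for i using \<open>m > 0\<close> by (simp add: power_int_def)
    ultimately show ?thesis using \<open>m > 0\<close> by (intro exI[of _ "nat m"]) auto
  qed
qed

theorem lemma5p2:
  fixes d :: nat and g :: "nat \<Rightarrow> complex" and F :: "(nat \<Rightarrow> int) \<Rightarrow> complex"
  assumes "d \<ge> 1"
    and "\<forall>i<d. g i \<noteq> 0"
    and "mult_independent d g"
    and "laurent_poly d F"
    and "zariski_irreducible d {x\<in>torus d. lp_eval d F x = 0}"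
    and "finite (stabilizer d {x\<in>torus d. lp_eval d F x = 0})"
  shows "finite_index
           (mgen (power_sum_roots (\<lambda>n. lp_eval d F (\<lambda>i. if i < d then g i ^ n else 1))))
           (mgen (g ` {..<d}))"
proof -
  have "{e. F e \<noteq> 0} \<noteq> {}"
  proof
    assume "{e. F e \<noteq> 0} = {}"
    then have "infinite (stabilizer d {x\<in>torus d. lp_eval d F x = 0})"
      using assms(1) by (intro stabilizer_infinite_if_annihilated[of 0 d "\<lambda>_. 1"]) auto
    with assms(6) show False by blast
  qed
  then have roots: "power_sum_roots (\<lambda>n. lp_eval d F (\<lambda>i. if i < d then g i ^ n else 1))
      = monomial d g ` {e. F e \<noteq> 0}"
    using assms(2-4) by (rule power_sum_roots_lp_eval[rotated -1])
  obtain m where "m > 0" "\<forall>i<d. g i ^ m \<in> mgen (monomial d g ` {e. F e \<noteq> 0})"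
    using generator_powers_in_mgen_monomials[OF assms(2,4,6)] by blast
  moreover have "0 \<notin> monomial d g ` {e. F e \<noteq> 0}" using monomial_nonzero[OF assms(2)] by auto
  moreover have "monomial d g ` {e. F e \<noteq> 0} \<subseteq> mgen (g ` {..<d})" using monomial_in_mgen by blast
  ultimately show ?thesis unfolding roots by (intro finite_index_if_generator_powers[OF assms(2)])
qed

end
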